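(* Let $\mathfrak{N}_1$ and $\mathfrak{N}_2$ be properly infinite von Neumann algebras on a Hilbert space $\mathcal{H}$ such that $\mathfrak{N}_1 \subseteq \mathfrak{N}_2'$ and $X_1 X_2 \neq 0$ for all nonzero $X_1 \in \mathfrak{N}_1$ and nonzero $X_2 \in \mathfrak{N}_2$. Then for every unit vector $\Psi \in \mathcal{H}$ and every $\epsilon > 0$ there exists a unit vector $\Psi' \in \mathcal{H}$ with $\|\Psi - \Psi'\| < \epsilon$ such that the vector state $X \mapsto \langle \Psi', X\Psi'\rangle$ of $\mathfrak{N}_1 \vee \mathfrak{N}_2$ is an EPR state for incommensurable pairs.
   Context: $\mathfrak{N}'$ denotes the commutant, $\mathfrak{N}_1 \vee \mathfrak{N}_2$ the von Neumann algebra generated by $\mathfrak{N}_1$ and $\mathfrak{N}_2$, $[X,Y] = XY - YX$, $|X|^2 = X^*X$. For commuting self-adjoint operators $A_1, A_2$, a normal state $\omega$ is an EPR state for $(A_1, A_2)$ if $\omega((A_1 - A_2)^2) = 0$. A normal state $\omega$ of $\mathfrak{N}_1 \vee \mathfrak{N}_2$ is an EPR state for incommensurable pairs if there exist projections $E_1, F_1 \in \mathfrak{N}_1$ and $E_2, F_2 \in \mathfrak{N}_2$ such that $\omega$ is an EPR state for $(E_1,E_2)$ and for $(F_1,F_2)$, $\omega(|[E_1,F_1]|^2) \neq 0$, and $\omega(|[E_2,F_2]|^2) \neq 0$. *)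

theory Defs
  imports Complex_Main
begin

class complex_inner = real_normed_vector +
  fixes scaleC :: "complex \<Rightarrow> 'a \<Rightarrow> 'a"
    and cinner :: "'a \<Rightarrow> 'a \<Rightarrow> complex"
  assumes scaleC_add_right: "scaleC c (x + y) = scaleC c x + scaleC c y"
    and scaleC_add_left: "scaleC (b + c) x = scaleC b x + scaleC c x"
    and scaleC_scaleC: "scaleC b (scaleC c x) = scaleC (b * c) x"
    and scaleC_one: "scaleC 1 x = x"
    and scaleR_scaleC: "scaleR r x = scaleC (complex_of_real r) x"
    and cinner_add_right: "cinner x (y + z) = cinner x y + cinner x z"
    and cinner_scaleC_right: "cinner x (scaleC c y) = c * cinner x y"
    and cinner_commute: "cinner x y = cnj (cinner y x)"
    and cinner_self_real: "cinner x x = complex_of_real (Re (cinner x x))"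
    and cinner_self_nonneg: "0 \<le> Re (cinner x x)"
    and norm_eq_sqrt_cinner: "norm x = sqrt (Re (cinner x x))"

class chilbert_space = complex_inner + complete_space

definition bounded_op :: "('h::complex_inner \<Rightarrow> 'h) \<Rightarrow> bool" where
  "bounded_op A \<longleftrightarrow>
     (\<forall>x y. A (x + y) = A x + A y) \<and>
     (\<forall>c x. A (scaleC c x) = scaleC c (A x)) \<and>
     (\<exists>K. \<forall>x. norm (A x) \<le> norm x * K)"

text \<open>Hilbert-space adjoint (exists and is unique for bounded operators by Riesz).\<close>

definition adj :: "('h::complex_inner \<Rightarrow> 'h) \<Rightarrow> ('h \<Rightarrow> 'h)" where
  "adj A = (SOME B. bounded_op B \<and> (\<forall>x y. cinner x (A y) = cinner (B x) y))"

definition commutant :: "('h::complex_inner \<Rightarrow> 'h) set \<Rightarrow> ('h \<Rightarrow> 'h) set" where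
  "commutant M = {B. bounded_op B \<and> (\<forall>A\<in>M. A \<circ> B = B \<circ> A)}"

text \<open>Von Neumann algebra: a self-adjoint set of bounded operators equal to its
double commutant (equivalently, by the double commutant theorem, a weakly closed
unital *-subalgebra).\<close>

definition von_neumann_algebra :: "('h::complex_inner \<Rightarrow> 'h) set \<Rightarrow> bool" where
  "von_neumann_algebra M \<longleftrightarrow>
     M \<subseteq> {A. bounded_op A} \<and> (\<forall>A\<in>M. adj A \<in> M) \<and> commutant (commutant M) = M"

definition vN_join :: "('h::complex_inner \<Rightarrow> 'h) set \<Rightarrow> ('h \<Rightarrow> 'h) set \<Rightarrow> ('h \<Rightarrow> 'h) set" where
  "vN_join N1 N2 = commutant (commutant (N1 \<union> N2))"

definition zero_op :: "'h::complex_inner \<Rightarrow> 'h" where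
  "zero_op = (\<lambda>_. 0)"

definition is_projection :: "('h::complex_inner \<Rightarrow> 'h) \<Rightarrow> bool" where
  "is_projection P \<longleftrightarrow> bounded_op P \<and> P \<circ> P = P \<and> adj P = P"

text \<open>A projection P in M is infinite if it is Murray--von Neumann equivalent (via a
partial isometry in M) to a proper subprojection of itself.\<close>

definition infinite_projection :: "('h::complex_inner \<Rightarrow> 'h) set \<Rightarrow> ('h \<Rightarrow> 'h) \<Rightarrow> bool" where
  "infinite_projection M P \<longleftrightarrow>
     (\<exists>V\<in>M. adj V \<circ> V = P \<and> P \<circ> (V \<circ> adj V) = V \<circ> adj V \<and> V \<circ> adj V \<noteq> P)"

definition properly_infinite :: "('h::complex_inner \<Rightarrow> 'h) set \<Rightarrow> bool" where
  "properly_infinite M \<longleftrightarrow>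
     (\<forall>P \<in> M \<inter> commutant M. is_projection P \<and> P \<noteq> zero_op \<longrightarrow> infinite_projection M P)"

definition op_diff :: "('h::complex_inner \<Rightarrow> 'h) \<Rightarrow> ('h \<Rightarrow> 'h) \<Rightarrow> ('h \<Rightarrow> 'h)" where
  "op_diff A B = (\<lambda>x. A x - B x)"

definition commutator :: "('h::complex_inner \<Rightarrow> 'h) \<Rightarrow> ('h \<Rightarrow> 'h) \<Rightarrow> ('h \<Rightarrow> 'h)" where
  "commutator X Y = op_diff (X \<circ> Y) (Y \<circ> X)"

definition abs_sq :: "('h::complex_inner \<Rightarrow> 'h) \<Rightarrow> ('h \<Rightarrow> 'h)" where
  "abs_sq X = adj X \<circ> X"

definition vector_state :: "'h::complex_inner \<Rightarrow> ('h \<Rightarrow> 'h) \<Rightarrow> complex" where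
  "vector_state \<Psi> X = cinner \<Psi> (X \<Psi>)"

definition EPR_state :: "(('h::complex_inner \<Rightarrow> 'h) \<Rightarrow> complex) \<Rightarrow> ('h \<Rightarrow> 'h) \<Rightarrow> ('h \<Rightarrow> 'h) \<Rightarrow> bool" where
  "EPR_state \<omega> A1 A2 \<longleftrightarrow> \<omega> (op_diff A1 A2 \<circ> op_diff A1 A2) = 0"

definition EPR_incommensurable ::
  "('h::complex_inner \<Rightarrow> 'h) set \<Rightarrow> ('h \<Rightarrow> 'h) set \<Rightarrow> (('h \<Rightarrow> 'h) \<Rightarrow> complex) \<Rightarrow> bool" where
  "EPR_incommensurable N1 N2 \<omega> \<longleftrightarrow>
     (\<exists>E1\<in>N1. \<exists>F1\<in>N1. \<exists>E2\<in>N2. \<exists>F2\<in>N2.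
        is_projection E1 \<and> is_projection F1 \<and> is_projection E2 \<and> is_projection F2 \<and>
        EPR_state \<omega> E1 E2 \<and> EPR_state \<omega> F1 F2 \<and>
        \<omega> (abs_sq (commutator E1 F1)) \<noteq> 0 \<and>
        \<omega> (abs_sq (commutator E2 F2)) \<noteq> 0)"

end

theory Submission
  imports Defs
begin

text \<open>In a properly infinite von Neumann algebra the identity is equivalent to a proper
  subprojection, so there is an isometry \<open>V\<close> with \<open>V V\<^sup>* \<noteq> 1\<close>. The projections
  \<open>V\<^sup>j (1 - V V\<^sup>*) V\<^sup>*\<^sup>j\<close> are mutually orthogonal, so for large \<open>j\<close> both the \<open>j\<close>-th and the
  \<open>(j+1)\<close>-st of them nearly annihilate \<open>\<Psi>\<close>; together with \<open>V\<close> they span a copy of the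
  2 \<times> 2 matrix units \<open>e\<^sub>i\<^sub>j\<close> in \<open>N\<^sub>1\<close> whose diagonal entries nearly annihilate \<open>\<Psi>\<close>.
  Let \<open>f\<^sub>i\<^sub>j\<close> be such matrix units in \<open>N\<^sub>2\<close>. Cutting \<open>\<Psi>\<close> down to
  \<open>\<chi> = (1 - e\<^sub>1\<^sub>1 - e\<^sub>2\<^sub>2)(1 - f\<^sub>1\<^sub>1 - f\<^sub>2\<^sub>2)\<Psi>\<close> changes it only a little, and \<open>\<chi>\<close> is killed by
  all matrix units. Since \<open>e\<^sub>1\<^sub>1 f\<^sub>1\<^sub>1 \<noteq> 0\<close> there is \<open>a \<noteq> 0\<close> with \<open>e\<^sub>1\<^sub>1 a = f\<^sub>1\<^sub>1 a = a\<close>, and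
  \<open>\<xi> = a + e\<^sub>2\<^sub>1 f\<^sub>2\<^sub>1 a\<close> is a Bell vector for the two copies of the 2 \<times> 2 matrices. The
  normalisation \<open>\<Psi>'\<close> of \<open>\<chi> + \<delta> \<xi>\<close>, for small \<open>\<delta> > 0\<close>, is EPR correlated for the pairs
  \<open>(e\<^sub>1\<^sub>1, f\<^sub>1\<^sub>1)\<close> and \<open>(F\<^sub>1, F\<^sub>2)\<close>, where \<open>F\<^sub>k\<close> is the projection whose matrix entries
  are all \<open>1/2\<close>, while \<open>[e\<^sub>1\<^sub>1, F\<^sub>1] \<Psi>' \<noteq> 0\<close> and \<open>[f\<^sub>1\<^sub>1, F\<^sub>2] \<Psi>' \<noteq> 0\<close>.\<close>

section \<open>Inner products\<close>

lemma cinner_add_left: "cinner (x + y) (z::'a::complex_inner) = cinner x z + cinner y z"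
  by (metis cinner_commute cinner_add_right complex_cnj_add)

lemma cinner_scaleC_left: "cinner (scaleC c x) (y::'a::complex_inner) = cnj c * cinner x y"
  by (metis cinner_commute cinner_scaleC_right complex_cnj_mult)

lemma cinner_zero_right [simp]: "cinner x (0::'a::complex_inner) = 0"
  using cinner_add_right [of x 0 0] by simp

lemma cinner_zero_left [simp]: "cinner (0::'a::complex_inner) x = 0"
  using cinner_add_left [of 0 0 x] by simp

lemma cinner_diff_right: "cinner x (y - z) = cinner x y - cinner x (z::'a::complex_inner)"
  using cinner_add_right [of x "y - z" z] by simp

lemma cinner_diff_left: "cinner (y - z) x = cinner y x - cinner z (x::'a::complex_inner)"
  using cinner_add_left [of "y - z" z x] by simp

lemma cinner_scaleR_right: "cinner x (scaleR r y) = of_real r * cinner x (y::'a::complex_inner)"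
  by (simp add: scaleR_scaleC cinner_scaleC_right)

lemma cinner_scaleR_left: "cinner (scaleR r x) y = of_real r * cinner x (y::'a::complex_inner)"
  by (simp add: scaleR_scaleC cinner_scaleC_left)

lemma cinner_self_eq_norm_sq: "cinner x (x::'a::complex_inner) = of_real (norm x ^ 2)"
  by (metis cinner_self_real cinner_self_nonneg norm_eq_sqrt_cinner real_sqrt_pow2)

lemma cinner_self_eq_0 [simp]: "cinner x (x::'a::complex_inner) = 0 \<longleftrightarrow> x = 0"
  by (simp add: cinner_self_eq_norm_sq)

lemma cinner_eqI: "(\<And>y. cinner u y = cinner v (y::'a::complex_inner)) \<Longrightarrow> u = v"
  using cinner_self_eq_0 [of "u - v"] by (simp add: cinner_diff_left)

lemma norm_add_sq:
  "norm (x + y) ^ 2 = norm x ^ 2 + norm y ^ 2 + 2 * Re (cinner x (y::'a::complex_inner))"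
proof -
  have "complex_of_real (norm (x + y) ^ 2) = cinner x x + cinner x y + cnj (cinner x y) + cinner y y"
    by (metis cinner_self_eq_norm_sq cinner_add_left cinner_add_right cinner_commute add.assoc)
  then have "norm (x + y) ^ 2 = Re (cinner x x + cinner x y + cnj (cinner x y) + cinner y y)"
    by (metis Re_complex_of_real)
  then show ?thesis
    by (simp add: cinner_self_eq_norm_sq)
qed

lemma parallelogram_law:
  "norm (x + y) ^ 2 + norm (x - y) ^ 2 = 2 * norm x ^ 2 + 2 * norm (y::'a::complex_inner) ^ 2"
  using norm_add_sq [of x y] norm_add_sq [of x "- y"] cinner_diff_right [of x 0 y] by simp

lemma norm_diff_projection_sq:
  fixes y w :: "'a::complex_inner"
  assumes "w \<noteq> 0"
  shows "norm (y - scaleC (cinner w y / cinner w w) w) ^ 2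
           = norm y ^ 2 - cmod (cinner w y) ^ 2 / norm w ^ 2"
proof -
  define a where "a = cinner w y"
  define n where "n = norm w ^ 2"
  have "n > 0"
    using assms by (simp add: n_def)
  have ww: "cinner w w = of_real n" and yw: "cinner y w = cnj a"
    by (simp_all add: n_def a_def cinner_self_eq_norm_sq cinner_commute [of y w])
  let ?t = "a / of_real n"
  have "complex_of_real (norm (y - scaleC ?t w) ^ 2) = cinner (y - scaleC ?t w) (y - scaleC ?t w)"
    by (simp add: cinner_self_eq_norm_sq)
  also have "\<dots> = cinner y y - ?t * cinner y w - cnj ?t * cinner w y + cnj ?t * ?t * cinner w w"
    by (simp add: cinner_diff_left cinner_diff_right cinner_scaleC_left cinner_scaleC_right
        algebra_simps)
  also have "\<dots> = cinner y y - a * cnj a / of_real n"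
    using \<open>n > 0\<close> by (simp add: ww yw a_def [symmetric] field_simps)
  also have "a * cnj a = of_real (cmod a ^ 2)"
    using complex_norm_square [of a] by simp
  finally have "complex_of_real (norm (y - scaleC ?t w) ^ 2) = of_real (norm y ^ 2 - cmod a ^ 2 / n)"
    by (simp add: cinner_self_eq_norm_sq)
  then have "norm (y - scaleC ?t w) ^ 2 = norm y ^ 2 - cmod a ^ 2 / n"
    using of_real_eq_iff by blast
  then show ?thesis
    by (simp add: a_def n_def ww)
qed

lemma cmod_cinner_le: "cmod (cinner x (y::'a::complex_inner)) \<le> norm x * norm y"
proof (cases "x = 0")
  case False
  have "0 \<le> norm y ^ 2 - cmod (cinner x y) ^ 2 / norm x ^ 2"
    using norm_diff_projection_sq [OF False, of y] by (metis zero_le_power2)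
  then have "cmod (cinner x y) ^ 2 \<le> (norm x * norm y) ^ 2"
    using False by (simp add: field_simps power_mult_distrib)
  then show ?thesis
    by (meson abs_le_square_iff abs_norm_cancel norm_ge_zero mult_nonneg_nonneg power2_le_imp_le)
qed simp

section \<open>The Riesz representation theorem\<close>

lemma minimizing_sequence_exists:
  fixes x :: "'a::real_normed_vector"
  assumes "s \<in> S"
  obtains ks where "\<And>n. ks n \<in> S"
    "\<And>n. norm (x - ks n) ^ 2 < (INF k\<in>S. norm (x - k)) ^ 2 + inverse (real (Suc n))"
proof -
  let ?d = "INF k\<in>S. norm (x - k)"
  have "\<exists>k\<in>S. norm (x - k) ^ 2 < ?d ^ 2 + inverse (real (Suc n))" for n
  proof -
    have "0 \<le> ?d"
      using assms by (auto intro: cINF_greatest)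
    then have "?d < sqrt (?d ^ 2 + inverse (real (Suc n)))"
      by (simp add: real_less_rsqrt)
    then obtain k where "k \<in> S" "norm (x - k) < sqrt (?d ^ 2 + inverse (real (Suc n)))"
      using assms by (subst (asm) cInf_less_iff) (auto intro: bdd_belowI [of _ 0])
    moreover from this(2) have "norm (x - k) ^ 2 < sqrt (?d ^ 2 + inverse (real (Suc n))) ^ 2"
      by (intro power_strict_mono) auto
    ultimately show ?thesis
      by auto
  qed
  then show ?thesis
    using that by metis
qed

text \<open>By the parallelogram law, \<open>\<parallel>k\<^sub>m - k\<^sub>n\<parallel>\<^sup>2\<close> is at most
  \<open>2\<parallel>x - k\<^sub>m\<parallel>\<^sup>2 + 2\<parallel>x - k\<^sub>n\<parallel>\<^sup>2 - 4\<parallel>x - (k\<^sub>m + k\<^sub>n)/2\<parallel>\<^sup>2\<close>.\<close>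

lemma minimizing_sequence_Cauchy:
  fixes x :: "'a::complex_inner"
  assumes "0 \<le> d"
    and mid: "\<And>m n. d \<le> norm (x - scaleR (1/2) (ks m + ks n))"
    and close: "\<And>n. norm (x - ks n) ^ 2 < d ^ 2 + inverse (real (Suc n))"
  shows "Cauchy ks"
proof (rule metric_CauchyI)
  have bound: "norm (ks m - ks n) ^ 2 \<le> 2 * inverse (real (Suc m)) + 2 * inverse (real (Suc n))"
    for m n
  proof -
    have "d ^ 2 \<le> norm (x - scaleR (1/2) (ks m + ks n)) ^ 2"
      using mid \<open>0 \<le> d\<close> by (simp add: power_mono)
    moreover have "(x - ks m) + (x - ks n) = scaleR 2 (x - scaleR (1/2) (ks m + ks n))"
      by (simp add: algebra_simps scaleR_2)
    ultimately have "norm (ks m - ks n) ^ 2 \<le> 2 * norm (x - ks m) ^ 2 + 2 * norm (x - ks n) ^ 2 - 4 * d ^ 2"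
      using parallelogram_law [of "x - ks m" "x - ks n"] by (simp add: power_mult_distrib norm_minus_commute)
    then show ?thesis
      using close [of m] close [of n] by linarith
  qed
  fix e :: real
  assume "0 < e"
  obtain N where N: "inverse (real (Suc N)) < e ^ 2 / 4"
    using \<open>0 < e\<close> reals_Archimedean [of "e ^ 2 / 4"] by auto
  have "dist (ks m) (ks n) < e" if "m \<ge> N" "n \<ge> N" for m n
  proof -
    have "inverse (real (Suc m)) \<le> inverse (real (Suc N))" "inverse (real (Suc n)) \<le> inverse (real (Suc N))"
      using that by (simp_all add: le_imp_inverse_le)
    then have "norm (ks m - ks n) ^ 2 < e ^ 2"
      using bound [of m n] N by linarith
    then show ?thesis
      using \<open>0 < e\<close> by (simp add: dist_norm power_less_imp_less_base)
  qed
  then show "\<exists>M. \<forall>m\<ge>M. \<forall>n\<ge>M. dist (ks m) (ks n) < e"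
    by blast
qed

lemma closest_point_exists:
  fixes x :: "'a::chilbert_space"
  assumes "closed S" "s \<in> S" and mid: "\<And>a b. a \<in> S \<Longrightarrow> b \<in> S \<Longrightarrow> scaleR (1/2) (a + b) \<in> S"
  obtains k where "k \<in> S" "\<And>w. w \<in> S \<Longrightarrow> norm (x - k) \<le> norm (x - w)"
proof -
  define d where "d = (INF k\<in>S. norm (x - k))"
  have "bdd_below ((\<lambda>k. norm (x - k)) ` S)"
    by (rule bdd_belowI2 [where m = 0]) simp
  then have d_le: "d \<le> norm (x - k)" if "k \<in> S" for k
    unfolding d_def using that by (rule cINF_lower)
  have "0 \<le> d"
    unfolding d_def using \<open>s \<in> S\<close> by (auto intro: cINF_greatest)
  obtain ks where ks: "\<And>n. ks n \<in> S"
    and close: "\<And>n. norm (x - ks n) ^ 2 < d ^ 2 + inverse (real (Suc n))"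
    unfolding d_def using minimizing_sequence_exists [OF \<open>s \<in> S\<close>] by blast
  have "Cauchy ks"
    using ks mid d_le by (intro minimizing_sequence_Cauchy [OF \<open>0 \<le> d\<close> _ close]) blast
  then obtain k where lim: "ks \<longlonglongrightarrow> k"
    using Cauchy_convergent_iff convergent_def by blast
  have "norm (x - k) ^ 2 \<le> d ^ 2"
  proof (rule LIMSEQ_le)
    show "(\<lambda>n. norm (x - ks n) ^ 2) \<longlonglongrightarrow> norm (x - k) ^ 2"
      by (intro tendsto_intros lim)
    show "(\<lambda>n. d ^ 2 + inverse (real (Suc n))) \<longlonglongrightarrow> d ^ 2"
      by (rule LIMSEQ_inverse_real_of_nat_add)
    show "\<exists>N. \<forall>n\<ge>N. norm (x - ks n) ^ 2 \<le> d ^ 2 + inverse (real (Suc n))"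
      using close less_imp_le by blast
  qed
  then have "norm (x - k) \<le> d"
    using \<open>0 \<le> d\<close> by (rule power2_le_imp_le)
  moreover have "k \<in> S"
    using \<open>closed S\<close> ks lim by (rule closed_sequentially)
  ultimately show ?thesis
    using that d_le order_trans by blast
qed

lemma kernel_closest_point:
  fixes f :: "'a::chilbert_space \<Rightarrow> complex"
  assumes "bounded_linear f"
  obtains k where "f k = 0" "\<And>w. f w = 0 \<Longrightarrow> norm (x - k) \<le> norm (x - w)"
proof -
  have "closed {k. f k = 0}"
    using assms
    by (intro closed_Collect_eq continuous_on_const bounded_linear.continuous_on [OF _ continuous_on_id])
  moreover have "f (scaleR (1/2) (a + b)) = 0" if "f a = 0" "f b = 0" for a b
    using that assms by (simp add: linear_add linear_scale bounded_linear.linear)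
  moreover have "f 0 = 0"
    using assms by (simp add: bounded_linear.linear linear_0)
  ultimately show ?thesis
    using closest_point_exists [of "{k. f k = 0}" 0 x] that by auto
qed

lemma closest_point_orthogonal:
  fixes f :: "'a::complex_inner \<Rightarrow> complex"
  assumes add: "\<And>x y. f (x + y) = f x + f y" and scaleC: "\<And>c x. f (scaleC c x) = c * f x"
    and "f k = 0" and closest: "\<And>w. f w = 0 \<Longrightarrow> norm (x - k) \<le> norm (x - w)"
    and "f w = 0"
  shows "cinner (x - k) w = 0"
proof (cases "w = 0")
  case False
  define y where "y = x - k"
  let ?t = "cinner w y / cinner w w"
  have "norm y \<le> norm (y - scaleC ?t w)"
    using closest [of "k + scaleC ?t w"] \<open>f k = 0\<close> \<open>f w = 0\<close>
    by (simp add: add scaleC y_def algebra_simps)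
  then have "norm y ^ 2 \<le> norm (y - scaleC ?t w) ^ 2"
    by (simp add: power_mono)
  then have "cmod (cinner w y) ^ 2 / norm w ^ 2 \<le> 0"
    by (simp add: norm_diff_projection_sq [OF False])
  then have "cinner w y = 0"
    using False by (simp add: divide_le_0_iff)
  then show ?thesis
    by (metis y_def cinner_commute complex_cnj_zero)
qed simp

lemma riesz_representation:
  fixes f :: "'a::chilbert_space \<Rightarrow> complex"
  assumes add: "\<And>x y. f (x + y) = f x + f y" and scaleC: "\<And>c x. f (scaleC c x) = c * f x"
    and bound: "\<And>x. cmod (f x) \<le> norm x * K"
  obtains z where "\<And>x. f x = cinner z x"
proof (cases "\<forall>x. f x = 0")
  case True
  then show ?thesis
    using that [of 0] by simp
next
  case False
  then obtain x0 where "f x0 \<noteq> 0"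
    by blast
  have diff: "f (x - y) = f x - f y" for x y
    using add [of "x - y" y] by simp
  have "bounded_linear f"
    using add bound by (intro bounded_linear_intro) (auto simp: scaleR_scaleC scaleC scaleR_conv_of_real)
  then obtain k where k: "f k = 0" "\<And>w. f w = 0 \<Longrightarrow> norm (x0 - k) \<le> norm (x0 - w)"
    using kernel_closest_point [of f x0] by blast
  define y where "y = x0 - k"
  have "f y = f x0"
    using k by (simp add: y_def diff)
  then have "y \<noteq> 0"
    using \<open>f x0 \<noteq> 0\<close> add [of 0 0] by auto
  have "f x = cinner (scaleC (cnj (f y / cinner y y)) y) x" for x
  proof -
    have "f (scaleC (f x) y - scaleC (f y) x) = 0"
      by (simp add: diff scaleC)
    then have "cinner y (scaleC (f x) y - scaleC (f y) x) = 0"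
      unfolding y_def using closest_point_orthogonal [OF add scaleC k] by blast
    then have "f x * cinner y y = f y * cinner y x"
      by (simp add: cinner_diff_right cinner_scaleC_right)
    then show ?thesis
      using \<open>y \<noteq> 0\<close> by (simp add: cinner_scaleC_left field_simps)
  qed
  then show ?thesis
    using that by blast
qed

section \<open>Bounded operators and adjoints\<close>

lemma bounded_op_add: "bounded_op A \<Longrightarrow> A (x + y) = A x + A y"
  by (simp add: bounded_op_def)

lemma bounded_op_scaleC: "bounded_op A \<Longrightarrow> A (scaleC c x) = scaleC c (A x)"
  by (simp add: bounded_op_def)

lemma bounded_op_zero: "bounded_op A \<Longrightarrow> A 0 = 0"
  using bounded_op_add [of A 0 0] by simp

lemma bounded_op_diff: "bounded_op A \<Longrightarrow> A (x - y) = A x - A y"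
  using bounded_op_add [of A "x - y" y] by simp

lemma bounded_op_scaleR: "bounded_op A \<Longrightarrow> A (scaleR r x) = scaleR r (A x)"
  by (simp add: scaleR_scaleC bounded_op_scaleC)

lemma bounded_opE:
  assumes "bounded_op A"
  obtains K where "0 \<le> K" "\<And>x. norm (A x) \<le> norm x * K"
proof -
  obtain K where K: "\<And>x. norm (A x) \<le> norm x * K"
    using assms by (auto simp: bounded_op_def)
  have "norm (A x) \<le> norm x * max K 0" for x
    using K [of x] mult_left_mono [of K "max K 0" "norm x"] by simp
  then show ?thesis
    using that [of "max K 0"] by simp
qed

lemma bounded_op_id: "bounded_op id"
  unfolding bounded_op_def by (auto intro: exI [of _ 1])

lemma bounded_op_comp:
  assumes "bounded_op A" "bounded_op B"
  shows "bounded_op (A \<circ> B)"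
proof -
  obtain K where "0 \<le> K" and K: "\<And>x. norm (A x) \<le> norm x * K"
    using bounded_opE [OF assms(1)] by blast
  obtain L where L: "\<And>x. norm (B x) \<le> norm x * L"
    using bounded_opE [OF assms(2)] by blast
  have "norm (A (B x)) \<le> norm x * (L * K)" for x
  proof -
    have "norm (A (B x)) \<le> norm (B x) * K"
      by (rule K)
    also have "\<dots> \<le> norm x * L * K"
      using L \<open>0 \<le> K\<close> by (rule mult_right_mono)
    finally show ?thesis
      by (simp add: mult.assoc)
  qed
  then show ?thesis
    using assms unfolding bounded_op_def by auto
qed

lemma bounded_op_plus:
  assumes "bounded_op A" "bounded_op B"
  shows "bounded_op (\<lambda>x. A x + B x)"
proof -
  obtain K where K: "\<And>x. norm (A x) \<le> norm x * K"
    using bounded_opE [OF assms(1)] by blast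
  obtain L where L: "\<And>x. norm (B x) \<le> norm x * L"
    using bounded_opE [OF assms(2)] by blast
  have "norm (A x + B x) \<le> norm x * (K + L)" for x
    using norm_triangle_ineq [of "A x" "B x"] K [of x] L [of x] by (simp add: distrib_left)
  then show ?thesis
    using assms unfolding bounded_op_def by (auto simp: scaleC_add_right)
qed

lemma bounded_op_scale:
  assumes "bounded_op A"
  shows "bounded_op (\<lambda>x. scaleR r (A x))"
proof -
  obtain K where K: "\<And>x. norm (A x) \<le> norm x * K"
    using bounded_opE [OF assms] by blast
  have "norm (scaleR r (A x)) \<le> norm x * (\<bar>r\<bar> * K)" for x
    using mult_left_mono [OF K [of x], of "\<bar>r\<bar>"] by (simp add: algebra_simps)
  moreover have "scaleR r (A (scaleC c x)) = scaleC c (scaleR r (A x))" for c x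
    using assms by (simp add: bounded_op_scaleC scaleR_scaleC scaleC_scaleC mult.commute)
  ultimately show ?thesis
    using assms unfolding bounded_op_def by (auto simp: scaleR_add_right)
qed

lemma op_diff_eq: "op_diff A B = (\<lambda>x. A x + scaleR (-1) (B x))"
  by (simp add: op_diff_def)

lemma bounded_op_op_diff: "bounded_op A \<Longrightarrow> bounded_op B \<Longrightarrow> bounded_op (op_diff A B)"
  unfolding op_diff_eq by (intro bounded_op_plus bounded_op_scale)

lemma bounded_op_funpow: "bounded_op A \<Longrightarrow> bounded_op (A ^^ n)"
  by (induction n) (simp_all add: bounded_op_comp flip: id_def add: bounded_op_id)

lemma bounded_op_commutator: "bounded_op A \<Longrightarrow> bounded_op B \<Longrightarrow> bounded_op (commutator A B)"
  by (simp add: commutator_def bounded_op_op_diff bounded_op_comp)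

definition adjoint_pair :: "('h::complex_inner \<Rightarrow> 'h) \<Rightarrow> ('h \<Rightarrow> 'h) \<Rightarrow> bool" where
  "adjoint_pair A B \<longleftrightarrow> (\<forall>x y. cinner x (A y) = cinner (B x) y)"

lemma bounded_op_adjoint:
  assumes "bounded_op A" "adjoint_pair A B"
  shows "bounded_op B"
proof -
  have B: "cinner x (A y) = cinner (B x) y" for x y
    using assms(2) by (simp add: adjoint_pair_def)
  obtain K where "0 \<le> K" and K: "\<And>x. norm (A x) \<le> norm x * K"
    using bounded_opE [OF assms(1)] by blast
  have "B (x + y) = B x + B y" for x y
    by (rule cinner_eqI) (simp add: B [symmetric] cinner_add_left)
  moreover have "B (scaleC c x) = scaleC c (B x)" for c x
    by (rule cinner_eqI) (simp add: B [symmetric] cinner_scaleC_left)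
  moreover have "norm (B x) \<le> norm x * K" for x
  proof -
    have "norm (B x) ^ 2 = Re (cinner x (A (B x)))"
      by (simp add: B cinner_self_eq_norm_sq)
    also have "\<dots> \<le> norm x * norm (A (B x))"
      using complex_Re_le_cmod [of "cinner x (A (B x))"] cmod_cinner_le [of x "A (B x)"] by linarith
    also have "\<dots> \<le> norm (B x) * (norm x * K)"
      using mult_left_mono [OF K [of "B x"], of "norm x"] by (simp add: algebra_simps)
    finally show ?thesis
      using \<open>0 \<le> K\<close> by (cases "B x = 0") (auto simp: power2_eq_square)
  qed
  ultimately show ?thesis
    unfolding bounded_op_def by blast
qed

lemma adjoint_exists:
  fixes A :: "'h::chilbert_space \<Rightarrow> 'h"
  assumes "bounded_op A"
  obtains B where "adjoint_pair A B"
proof -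
  obtain K where K: "\<And>x. norm (A x) \<le> norm x * K"
    using bounded_opE [OF assms] by blast
  have "\<exists>z. \<forall>y. cinner x (A y) = cinner z y" for x
  proof -
    have "cmod (cinner x (A y)) \<le> norm y * (norm x * K)" for y
      using cmod_cinner_le [of x "A y"] mult_left_mono [OF K [of y], of "norm x"]
      by (simp add: algebra_simps)
    moreover have "cinner x (A (y + y')) = cinner x (A y) + cinner x (A y')" for y y'
      using assms by (simp add: bounded_op_add cinner_add_right)
    moreover have "cinner x (A (scaleC c y)) = c * cinner x (A y)" for c y
      using assms by (simp add: bounded_op_scaleC cinner_scaleC_right)
    ultimately obtain z where "\<And>y. cinner x (A y) = cinner z y"
      using riesz_representation [of "\<lambda>y. cinner x (A y)" "norm x * K"] by blast
    then show ?thesis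
      by blast
  qed
  then show ?thesis
    using that unfolding adjoint_pair_def by metis
qed

text \<open>\<open>adj\<close> is defined by Hilbert choice, so it is the adjoint only once some bounded adjoint
  is known to exist; this is where completeness enters, through the Riesz representation.\<close>

lemma adjoint_pair_adj:
  fixes A :: "'h::chilbert_space \<Rightarrow> 'h"
  assumes "bounded_op A"
  shows "bounded_op (adj A) \<and> adjoint_pair A (adj A)"
proof -
  obtain B where "adjoint_pair A B"
    using adjoint_exists [OF assms] .
  then have "\<exists>B. bounded_op B \<and> (\<forall>x y. cinner x (A y) = cinner (B x) y)"
    using bounded_op_adjoint [OF assms] by (auto simp: adjoint_pair_def)
  then show ?thesis
    unfolding adj_def adjoint_pair_def by (rule someI_ex)
qed

lemma adj_eqI:
  assumes "bounded_op B" "adjoint_pair A B"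
  shows "adj A = B"
proof -
  have "\<exists>B. bounded_op B \<and> (\<forall>x y. cinner x (A y) = cinner (B x) y)"
    using assms by (auto simp: adjoint_pair_def)
  then have adj: "\<forall>x y. cinner x (A y) = cinner (adj A x) y"
    unfolding adj_def by (rule someI2_ex) blast
  show ?thesis
  proof
    fix x
    show "adj A x = B x"
      by (rule cinner_eqI) (metis adj assms(2) adjoint_pair_def)
  qed
qed

lemma adjoint_pair_sym: "adjoint_pair A B \<Longrightarrow> adjoint_pair B A"
  unfolding adjoint_pair_def by (metis cinner_commute)

lemma adjoint_pair_id: "adjoint_pair id id"
  by (simp add: adjoint_pair_def)

lemma adjoint_pair_comp: "adjoint_pair A A' \<Longrightarrow> adjoint_pair B B' \<Longrightarrow> adjoint_pair (A \<circ> B) (B' \<circ> A')"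
  by (simp add: adjoint_pair_def)

lemma adjoint_pair_plus:
  "adjoint_pair A A' \<Longrightarrow> adjoint_pair B B' \<Longrightarrow> adjoint_pair (\<lambda>x. A x + B x) (\<lambda>x. A' x + B' x)"
  by (simp add: adjoint_pair_def cinner_add_left cinner_add_right)

lemma adjoint_pair_scale: "adjoint_pair A A' \<Longrightarrow> adjoint_pair (\<lambda>x. scaleR r (A x)) (\<lambda>x. scaleR r (A' x))"
  by (simp add: adjoint_pair_def cinner_scaleR_left cinner_scaleR_right)

lemma adjoint_pair_op_diff:
  "adjoint_pair A A' \<Longrightarrow> adjoint_pair B B' \<Longrightarrow> adjoint_pair (op_diff A B) (op_diff A' B')"
  unfolding op_diff_eq by (intro adjoint_pair_plus adjoint_pair_scale)

lemma adjoint_pair_funpow: "adjoint_pair A A' \<Longrightarrow> adjoint_pair (A ^^ n) (A' ^^ n)"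
proof (induction n)
  case 0
  then show ?case
    using adjoint_pair_id by (simp add: id_def)
next
  case (Suc n)
  then have "adjoint_pair (A ^^ n \<circ> A) (A' \<circ> A' ^^ n)"
    by (simp add: adjoint_pair_comp)
  moreover have "A ^^ Suc n = A ^^ n \<circ> A"
    by (rule funpow_Suc_right)
  moreover have "A' ^^ Suc n = A' \<circ> A' ^^ n"
    by (rule funpow.simps(2))
  ultimately show ?case
    by (simp only:)
qed

lemma isometry_norm:
  assumes "adjoint_pair V W" "\<And>x. W (V x) = x"
  shows "norm (V x) = norm x"
proof -
  have "cinner (V x) (V x) = cinner x x"
    using assms by (simp add: adjoint_pair_def)
  then have "norm (V x) ^ 2 = norm x ^ 2"
    unfolding cinner_self_eq_norm_sq using of_real_eq_iff by blast
  then show ?thesis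
    by (simp add: power2_eq_iff_nonneg)
qed

lemma isometry_funpow:
  fixes V W :: "'a \<Rightarrow> 'a"
  assumes "\<And>x. W (V x) = x"
  shows "(W ^^ n) ((V ^^ n) x) = x"
proof (induction n arbitrary: x)
  case (Suc n)
  have "(W ^^ Suc n) ((V ^^ Suc n) x) = (W ^^ n) (W (V ((V ^^ n) x)))"
    by (simp only: funpow_Suc_right [of n W] funpow.simps(2) [of n V] comp_apply)
  then show ?case
    using Suc assms by simp
qed simp

lemma projection_norm_le:
  assumes "bounded_op P" "adjoint_pair P P" "\<And>x. P (P x) = P x"
  shows "norm (P x) \<le> norm x"
proof -
  have "cinner (P x) (P x) = cinner (P x) x"
    using assms(2,3) unfolding adjoint_pair_def by metis
  then have "cinner (P x) (x - P x) = 0"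
    by (simp add: cinner_diff_right)
  then have "norm x ^ 2 = norm (P x) ^ 2 + norm (x - P x) ^ 2"
    using norm_add_sq [of "P x" "x - P x"] by simp
  then show ?thesis
    by (simp add: power2_le_imp_le)
qed

lemma is_projectionI:
  assumes "bounded_op P" "adjoint_pair P P" "\<And>x. P (P x) = P x"
  shows "is_projection P"
  using assms adj_eqI [OF assms(1,2)] by (auto simp: is_projection_def)

section \<open>Von Neumann algebras\<close>

lemma commutant_iff:
  "A \<in> commutant M \<longleftrightarrow> bounded_op A \<and> (\<forall>C\<in>M. \<forall>x. C (A x) = A (C x))"
  by (auto simp: commutant_def fun_eq_iff)

lemma commutant_commute: "X \<in> commutant M \<Longrightarrow> Y \<in> M \<Longrightarrow> X (Y x) = Y (X x)"
  by (simp add: commutant_iff)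

lemma id_in_commutant: "id \<in> commutant M"
  by (simp add: commutant_iff bounded_op_id)

lemma commutant_closed:
  assumes "M \<subseteq> {C. bounded_op C}" "A \<in> commutant M" "B \<in> commutant M"
  shows "A \<circ> B \<in> commutant M" "(\<lambda>x. A x + B x) \<in> commutant M"
    "(\<lambda>x. scaleR r (A x)) \<in> commutant M"
proof -
  have A: "bounded_op A" "\<And>C x. C \<in> M \<Longrightarrow> C (A x) = A (C x)"
    and B: "bounded_op B" "\<And>C x. C \<in> M \<Longrightarrow> C (B x) = B (C x)"
    using assms(2,3) by (auto simp: commutant_iff)
  have C: "bounded_op C" if "C \<in> M" for C
    using assms(1) that by blast
  show "A \<circ> B \<in> commutant M"
    using A B by (simp add: commutant_iff bounded_op_comp)
  show "(\<lambda>x. A x + B x) \<in> commutant M"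
    using A B C by (simp add: commutant_iff bounded_op_plus bounded_op_add)
  show "(\<lambda>x. scaleR r (A x)) \<in> commutant M"
    using A C by (simp add: commutant_iff bounded_op_scale bounded_op_scaleR)
qed

lemma von_neumann_algebra_bounded: "von_neumann_algebra N \<Longrightarrow> A \<in> N \<Longrightarrow> bounded_op A"
  by (auto simp: von_neumann_algebra_def)

lemma von_neumann_algebra_adj: "von_neumann_algebra N \<Longrightarrow> A \<in> N \<Longrightarrow> adj A \<in> N"
  by (simp add: von_neumann_algebra_def)

lemma von_neumann_algebra_id: "von_neumann_algebra N \<Longrightarrow> id \<in> N"
  by (metis von_neumann_algebra_def id_in_commutant)

lemma von_neumann_algebra_closed:
  assumes "von_neumann_algebra N" "A \<in> N" "B \<in> N"
  shows "A \<circ> B \<in> N" "(\<lambda>x. A x + B x) \<in> N" "(\<lambda>x. scaleR r (A x)) \<in> N" "op_diff A B \<in> N"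
proof -
  have N: "N = commutant (commutant N)"
    using assms(1) by (simp add: von_neumann_algebra_def)
  have bounded: "commutant N \<subseteq> {C. bounded_op C}"
    by (auto simp: commutant_def)
  show "A \<circ> B \<in> N" "(\<lambda>x. A x + B x) \<in> N" "(\<lambda>x. scaleR r (A x)) \<in> N"
    using commutant_closed [OF bounded, of A B, folded N] assms by auto
  have "(\<lambda>x. scaleR (-1) (B x)) \<in> N"
    using commutant_closed(3) [OF bounded, of B B "-1", folded N] assms(3) by blast
  then show "op_diff A B \<in> N"
    unfolding op_diff_eq using commutant_closed(2) [OF bounded, folded N] assms(2) by blast
qed

lemma von_neumann_algebra_funpow: "von_neumann_algebra N \<Longrightarrow> A \<in> N \<Longrightarrow> A ^^ n \<in> N"
  by (induction n) (auto simp: von_neumann_algebra_id von_neumann_algebra_closed)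

lemma properly_infinite_proper_isometry:
  fixes N :: "('h::chilbert_space \<Rightarrow> 'h) set"
  assumes vn: "von_neumann_algebra N" and "properly_infinite N" and "(x::'h) \<noteq> 0"
  obtains V W where "V \<in> N" "W \<in> N" "adjoint_pair V W" "\<And>x. W (V x) = x" "V \<circ> W \<noteq> id"
proof -
  have "id \<in> N \<inter> commutant N"
    using von_neumann_algebra_id [OF vn] id_in_commutant by blast
  moreover have "is_projection (id :: 'h \<Rightarrow> 'h)"
    by (rule is_projectionI) (simp_all add: bounded_op_id adjoint_pair_id)
  moreover have "(id :: 'h \<Rightarrow> 'h) \<noteq> zero_op"
    using \<open>x \<noteq> 0\<close> by (metis id_apply zero_op_def)
  ultimately have "infinite_projection N id"
    using \<open>properly_infinite N\<close> by (simp add: properly_infinite_def)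
  then obtain V where "V \<in> N" "adj V \<circ> V = id" "V \<circ> adj V \<noteq> id"
    by (auto simp: infinite_projection_def)
  moreover have "adjoint_pair V (adj V)"
    using adjoint_pair_adj von_neumann_algebra_bounded [OF vn \<open>V \<in> N\<close>] by blast
  ultimately show ?thesis
    using that von_neumann_algebra_adj [OF vn] by (metis comp_apply id_apply)
qed

section \<open>Matrix units with small diagonal in a properly infinite algebra\<close>

text \<open>For an isometry \<open>V\<close> with adjoint \<open>W\<close>, \<open>\<parallel>W\<^sup>j \<Psi> - V W\<^sup>j\<^sup>+\<^sup>1 \<Psi>\<parallel>\<close> is the norm of the component of
  \<open>\<Psi>\<close> in the range of \<open>V\<^sup>j (1 - V W) W\<^sup>j\<close>. These ranges are mutually orthogonal, so the
  squares are summable.\<close>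

lemma defect_components_vanish:
  assumes "bounded_op W" "adjoint_pair V W" "\<And>x. W (V x) = x"
  shows "(\<lambda>j. norm ((W ^^ j) \<Psi> - V ((W ^^ Suc j) \<Psi>)) ^ 2) \<longlonglongrightarrow> 0"
proof -
  have split: "norm y ^ 2 = norm (y - V (W y)) ^ 2 + norm (W y) ^ 2" for y
  proof -
    have "cinner (y - V (W y)) (V (W y)) = cinner (W y - W (V (W y))) (W y)"
      using assms(1,2) by (simp add: adjoint_pair_def bounded_op_diff)
    then have "cinner (y - V (W y)) (V (W y)) = 0"
      using assms(3) by simp
    then show ?thesis
      using norm_add_sq [of "y - V (W y)" "V (W y)"] isometry_norm [OF assms(2,3)] by simp
  qed
  define a where "a j = norm ((W ^^ j) \<Psi> - V ((W ^^ Suc j) \<Psi>)) ^ 2" for j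
  have "(\<Sum>j<n. a j) = norm \<Psi> ^ 2 - norm ((W ^^ n) \<Psi>) ^ 2" for n
  proof (induction n)
    case (Suc n)
    have "norm ((W ^^ n) \<Psi>) ^ 2 = a n + norm ((W ^^ Suc n) \<Psi>) ^ 2"
      using split [of "(W ^^ n) \<Psi>"] by (simp add: a_def)
    then show ?case
      using Suc by simp
  qed simp
  then have "summable a"
    by (intro summableI_nonneg_bounded [of _ "norm \<Psi> ^ 2"]) (auto simp: a_def)
  then show ?thesis
    unfolding a_def by (rule summable_LIMSEQ_zero)
qed

text \<open>For \<open>W = V\<^sup>*\<close>, \<open>defect_proj V W j\<close> is the projection onto \<open>V\<^sup>j (ker V\<^sup>*)\<close>.\<close>

definition defect_proj :: "('h::complex_inner \<Rightarrow> 'h) \<Rightarrow> ('h \<Rightarrow> 'h) \<Rightarrow> nat \<Rightarrow> 'h \<Rightarrow> 'h" where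
  "defect_proj V W j = V ^^ j \<circ> op_diff id (V \<circ> W) \<circ> W ^^ j"

lemma defect_proj_apply: "defect_proj V W j x = (V ^^ j) ((W ^^ j) x - V (W ((W ^^ j) x)))"
  by (simp add: defect_proj_def op_diff_def)

lemma von_neumann_algebra_defect_proj:
  "von_neumann_algebra N \<Longrightarrow> V \<in> N \<Longrightarrow> W \<in> N \<Longrightarrow> defect_proj V W j \<in> N"
  unfolding defect_proj_def
  by (intro von_neumann_algebra_closed von_neumann_algebra_funpow von_neumann_algebra_id)

lemma bounded_op_defect_proj: "bounded_op V \<Longrightarrow> bounded_op W \<Longrightarrow> bounded_op (defect_proj V W j)"
  unfolding defect_proj_def
  by (intro bounded_op_comp bounded_op_op_diff bounded_op_id bounded_op_funpow)

lemma adjoint_pair_defect_proj: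
  assumes "adjoint_pair V W"
  shows "adjoint_pair (defect_proj V W j) (defect_proj V W j)"
proof -
  have P: "adjoint_pair (op_diff id (V \<circ> W)) (op_diff id (V \<circ> W))"
    using adjoint_pair_comp [OF assms adjoint_pair_sym [OF assms]]
    by (rule adjoint_pair_op_diff [OF adjoint_pair_id])
  have "adjoint_pair (V ^^ j) (W ^^ j)"
    using assms by (rule adjoint_pair_funpow)
  from adjoint_pair_comp [OF this adjoint_pair_comp [OF P adjoint_pair_sym [OF this]]] show ?thesis
    by (simp add: defect_proj_def comp_assoc)
qed

lemma defect_proj_relations:
  fixes V W :: "'h::complex_inner \<Rightarrow> 'h" and j :: nat
  assumes V: "bounded_op V" and W: "bounded_op W" and WV: "\<And>x. W (V x) = x"
  defines "D \<equiv> defect_proj V W j"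
  shows "D (D x) = D x" "D (V (D x)) = 0" "D (W (D x)) = 0"
    "D ((V ^^ j) (y - V (W y))) = (V ^^ j) (y - V (W y))"
proof -
  have Vj: "bounded_op (V ^^ j)" and Wj: "bounded_op (W ^^ j)"
    using V W by (simp_all add: bounded_op_funpow)
  have WVj: "(W ^^ j) ((V ^^ j) x) = x" for x
    using WV by (rule isometry_funpow)
  have swap: "(V ^^ j) (V x) = V ((V ^^ j) x)" "(W ^^ j) (W x) = W ((W ^^ j) x)" for x
    by (simp_all add: funpow_swap1)
  note simps = D_def defect_proj_apply WVj WV V [THEN bounded_op_diff] W [THEN bounded_op_diff]
    Vj [THEN bounded_op_diff] Wj [THEN bounded_op_diff] V [THEN bounded_op_zero] W [THEN bounded_op_zero]
    Vj [THEN bounded_op_zero] Wj [THEN bounded_op_zero]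
  show "D (D x) = D x" "D ((V ^^ j) (y - V (W y))) = (V ^^ j) (y - V (W y))"
    by (simp_all add: simps)
  show "D (V (D x)) = 0"
    by (simp add: simps swap(1) [symmetric])
  show "D (W (D x)) = 0"
    by (simp add: simps swap(2))
qed

lemma norm_defect_proj:
  assumes "adjoint_pair V W" "\<And>x. W (V x) = x"
  shows "norm (defect_proj V W j x) = norm ((W ^^ j) x - V ((W ^^ Suc j) x))"
  using isometry_norm [OF adjoint_pair_funpow [OF assms(1)] isometry_funpow [where V = V and W = W, OF assms(2)]]
  by (simp add: defect_proj_apply)

lemma defect_proj_nonzero:
  assumes "bounded_op V" "bounded_op W" "adjoint_pair V W" "\<And>x. W (V x) = x" "V \<circ> W \<noteq> id"
  shows "defect_proj V W j \<noteq> zero_op"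
proof
  obtain y where "V (W y) \<noteq> y"
    using assms(5) by (auto simp: fun_eq_iff)
  then have "(V ^^ j) (y - V (W y)) \<noteq> 0"
    using isometry_norm [OF adjoint_pair_funpow [OF assms(3)] isometry_funpow [where V = V and W = W, OF assms(4)]]
    by (metis eq_iff_diff_eq_0 norm_eq_zero)
  moreover assume "defect_proj V W j = zero_op"
  ultimately show False
    using defect_proj_relations(4) [OF assms(1,2,4)] by (metis zero_op_def)
qed

text \<open>\<open>u i j\<close> plays the role of the matrix unit \<open>e\<^sub>i\<^sub>j\<close> of the 2 \<times> 2 matrices, the index \<open>False\<close>
  standing for 1 and \<open>True\<close> for 2.\<close>

definition matrix_units :: "(bool \<Rightarrow> bool \<Rightarrow> 'h::complex_inner \<Rightarrow> 'h) \<Rightarrow> bool" where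
  "matrix_units u \<longleftrightarrow> (\<forall>i j. bounded_op (u i j) \<and> adjoint_pair (u i j) (u j i)) \<and>
     (\<forall>i j k l x. u i j (u k l x) = (if j = k then u i l x else 0))"

lemma matrix_units_mult: "matrix_units u \<Longrightarrow> u i j (u k l x) = (if j = k then u i l x else 0)"
  by (simp add: matrix_units_def)

lemma matrix_units_bounded: "matrix_units u \<Longrightarrow> bounded_op (u i j)"
  by (simp add: matrix_units_def)

lemma matrix_units_adjoint_pair: "matrix_units u \<Longrightarrow> adjoint_pair (u i j) (u j i)"
  by (simp add: matrix_units_def)

lemma matrix_units_linear:
  assumes "matrix_units u"
  shows "u i j (x + y) = u i j x + u i j y" "u i j (x - y) = u i j x - u i j y"
    "u i j (scaleR r x) = scaleR r (u i j x)" "u i j 0 = 0"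
  using matrix_units_bounded [OF assms]
  by (simp_all add: bounded_op_add bounded_op_diff bounded_op_scaleR bounded_op_zero)

lemma matrix_units_is_projection: "matrix_units u \<Longrightarrow> is_projection (u i i)"
  by (intro is_projectionI) (simp_all add: matrix_units_bounded matrix_units_adjoint_pair matrix_units_mult)

lemma matrix_units_of_isometry:
  assumes "bounded_op V" "bounded_op W" "adjoint_pair V W" "\<And>x. W (V x) = x"
    and "bounded_op e" "adjoint_pair e e" "\<And>x. e (e x) = e x"
    and "\<And>x. e (V (e x)) = 0" "\<And>x. e (W (e x)) = 0"
  shows "matrix_units (\<lambda>i j. (if i then V else id) \<circ> e \<circ> (if j then W else id))"
proof -
  have "adjoint_pair ((if i then V else id) \<circ> e \<circ> (if j then W else id))
          ((if j then V else id) \<circ> e \<circ> (if i then W else id))" for i j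
  proof -
    have "adjoint_pair (if i then V else id) (if i then W else id)"
      "adjoint_pair (if j then W else id) (if j then V else id)"
      using assms(3) by (simp_all add: adjoint_pair_id adjoint_pair_sym)
    then show ?thesis
      using adjoint_pair_comp [OF adjoint_pair_comp [OF _ assms(6)]] by (metis comp_assoc)
  qed
  moreover have "bounded_op ((if i then V else id) \<circ> e \<circ> (if j then W else id))" for i j
    using assms by (simp add: bounded_op_comp bounded_op_id)
  ultimately show ?thesis
    using assms bounded_op_zero [OF assms(1)] bounded_op_zero [OF assms(5)]
    by (auto simp: matrix_units_def)
qed

lemma properly_infinite_small_matrix_units:
  fixes N :: "('h::chilbert_space \<Rightarrow> 'h) set"
  assumes vn: "von_neumann_algebra N" and "properly_infinite N" and "\<Psi> \<noteq> 0" and "\<eta> > 0"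
  obtains u where "matrix_units u" "\<And>i j. u i j \<in> N" "u False False \<noteq> zero_op"
    "\<And>i. norm (u i i \<Psi>) < \<eta>"
proof -
  obtain V W where "V \<in> N" "W \<in> N" "adjoint_pair V W" and WV: "\<And>x. W (V x) = x" and "V \<circ> W \<noteq> id"
    using properly_infinite_proper_isometry [OF vn \<open>properly_infinite N\<close> \<open>\<Psi> \<noteq> 0\<close>] by blast
  have bounded: "bounded_op V" "bounded_op W"
    using von_neumann_algebra_bounded [OF vn] \<open>V \<in> N\<close> \<open>W \<in> N\<close> by auto
  define a where "a j = norm ((W ^^ j) \<Psi> - V ((W ^^ Suc j) \<Psi>)) ^ 2" for j
  have "a \<longlonglongrightarrow> 0"
    unfolding a_def using bounded(2) \<open>adjoint_pair V W\<close> WV by (rule defect_components_vanish)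
  then have "\<forall>\<^sub>F j in sequentially. a j < \<eta> ^ 2"
    using \<open>\<eta> > 0\<close> by (intro order_tendstoD) auto
  then obtain j where small: "a j < \<eta> ^ 2" "a (Suc j) < \<eta> ^ 2"
    unfolding eventually_sequentially by (meson le_SucI order_refl)
  define u where "u i k = (if i then V else id) \<circ> defect_proj V W j \<circ> (if k then W else id)" for i k
  have "matrix_units u"
    unfolding u_def using bounded \<open>adjoint_pair V W\<close> WV
    by (intro matrix_units_of_isometry bounded_op_defect_proj adjoint_pair_defect_proj defect_proj_relations)
  moreover have "u i k \<in> N" for i k
    using vn \<open>V \<in> N\<close> \<open>W \<in> N\<close> von_neumann_algebra_defect_proj [OF vn \<open>V \<in> N\<close> \<open>W \<in> N\<close>]
    by (simp add: u_def von_neumann_algebra_closed von_neumann_algebra_id)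
  moreover have "u False False \<noteq> zero_op"
    using defect_proj_nonzero [OF bounded \<open>adjoint_pair V W\<close> WV \<open>V \<circ> W \<noteq> id\<close>] by (simp add: u_def)
  moreover have "norm (u i i \<Psi>) < \<eta>" for i
  proof -
    have "norm (u False False \<Psi>) ^ 2 = a j" "norm (u True True \<Psi>) ^ 2 = a (Suc j)"
      using norm_defect_proj [OF \<open>adjoint_pair V W\<close> WV] isometry_norm [OF \<open>adjoint_pair V W\<close> WV]
      by (simp_all add: u_def a_def funpow_swap1)
    then show ?thesis
      using small \<open>\<eta> > 0\<close> by (cases i) (auto intro: power2_less_imp_less)
  qed
  ultimately show ?thesis
    using that by blast
qed

section \<open>EPR states of perturbed Bell vectors\<close>

text \<open>The projection onto the span of \<open>e\<^sub>1 + e\<^sub>2\<close>, i.e. the matrix with all entries \<open>1/2\<close>.\<close>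

definition plus_proj :: "(bool \<Rightarrow> bool \<Rightarrow> 'h::complex_inner \<Rightarrow> 'h) \<Rightarrow> 'h \<Rightarrow> 'h" where
  "plus_proj u = (\<lambda>x. scaleR (1/2) (u False False x + u False True x + u True False x + u True True x))"

lemma von_neumann_algebra_plus_proj:
  "von_neumann_algebra N \<Longrightarrow> (\<And>i j. u i j \<in> N) \<Longrightarrow> plus_proj u \<in> N"
  unfolding plus_proj_def by (intro von_neumann_algebra_closed)

lemma is_projection_plus_proj:
  assumes u: "matrix_units u"
  shows "is_projection (plus_proj u)"
proof (rule is_projectionI)
  show "bounded_op (plus_proj u)"
    unfolding plus_proj_def by (intro bounded_op_scale bounded_op_plus matrix_units_bounded [OF u])
  have "cinner x (u i j y) = cinner (u j i x) y" for i j x y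
    using matrix_units_adjoint_pair [OF u] by (simp add: adjoint_pair_def)
  then show "adjoint_pair (plus_proj u) (plus_proj u)"
    by (simp add: adjoint_pair_def plus_proj_def cinner_add_left cinner_add_right
        cinner_scaleR_left cinner_scaleR_right algebra_simps)
  show "plus_proj u (plus_proj u x) = plus_proj u x" for x
  proof -
    let ?S = "u False False x + u False True x + u True False x + u True True x"
    have "plus_proj u (plus_proj u x) = scaleR (1/2) (scaleR (1/2) (?S + ?S))"
      by (simp add: plus_proj_def matrix_units_linear [OF u] matrix_units_mult [OF u] algebra_simps)
    then show ?thesis
      by (simp add: plus_proj_def flip: scaleR_2)
  qed
qed

definition compl_proj :: "(bool \<Rightarrow> bool \<Rightarrow> 'h::complex_inner \<Rightarrow> 'h) \<Rightarrow> 'h \<Rightarrow> 'h" where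
  "compl_proj u = op_diff (op_diff id (u False False)) (u True True)"

lemma compl_proj_apply: "compl_proj u x = x - u False False x - u True True x"
  by (simp add: compl_proj_def op_diff_def)

lemma matrix_units_compl_proj: "matrix_units u \<Longrightarrow> u i j (compl_proj u x) = 0"
  by (simp add: compl_proj_apply matrix_units_linear matrix_units_mult)

lemma norm_compl_proj_le:
  assumes u: "matrix_units u"
  shows "norm (compl_proj u x) \<le> norm x"
proof (rule projection_norm_le)
  show "bounded_op (compl_proj u)"
    unfolding compl_proj_def by (intro bounded_op_op_diff bounded_op_id matrix_units_bounded [OF u])
  show "adjoint_pair (compl_proj u) (compl_proj u)"
    unfolding compl_proj_def
    by (intro adjoint_pair_op_diff adjoint_pair_id matrix_units_adjoint_pair [OF u])
  show "compl_proj u (compl_proj u y) = compl_proj u y" for y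
    using matrix_units_compl_proj [OF u] by (simp add: compl_proj_apply [of u "compl_proj u y"])
qed

lemma matrix_units_compl_proj_compl_proj:
  assumes u: "matrix_units u" and v: "matrix_units v"
    and commute: "\<And>i j k l x. u i j (v k l x) = v k l (u i j x)"
  shows "u i j (compl_proj u (compl_proj v x)) = 0" "v i j (compl_proj u (compl_proj v x)) = 0"
  using matrix_units_compl_proj [OF u] matrix_units_compl_proj [OF v]
  by (simp_all add: compl_proj_apply [of u] commute [symmetric] matrix_units_linear [OF u]
      matrix_units_linear [OF v])

lemma norm_diff_compl_proj_le:
  assumes u: "matrix_units u" and v: "matrix_units v"
    and commute: "\<And>i j k l x. u i j (v k l x) = v k l (u i j x)"
  shows "norm (\<Psi> - compl_proj u (compl_proj v \<Psi>))
           \<le> norm (u False False \<Psi>) + norm (u True True \<Psi>) + norm (v False False \<Psi>) + norm (v True True \<Psi>)"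
proof -
  have swap: "u i i (compl_proj v \<Psi>) = compl_proj v (u i i \<Psi>)" for i
    by (simp add: compl_proj_apply commute matrix_units_linear [OF u])
  have "\<Psi> - compl_proj u (compl_proj v \<Psi>)
          = (v False False \<Psi> + v True True \<Psi>) + (compl_proj v (u False False \<Psi>) + compl_proj v (u True True \<Psi>))"
    by (simp add: compl_proj_apply [of u] swap [symmetric]) (simp add: compl_proj_apply algebra_simps)
  also have "norm \<dots> \<le> (norm (v False False \<Psi>) + norm (v True True \<Psi>))
                      + (norm (u False False \<Psi>) + norm (u True True \<Psi>))"
    using norm_compl_proj_le [OF v] by (intro norm_triangle_le add_mono) auto
  finally show ?thesis
    by simp
qed

lemma matrix_units_fixed_vector:
  assumes "matrix_units u" "u False False a = a"
  shows "u i True a = 0"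
  using matrix_units_mult [OF assms(1), of i True False False a] assms(2) by simp

lemma matrix_units_common_vector:
  assumes u: "matrix_units u" and v: "matrix_units v"
    and commute: "\<And>i j k l x. u i j (v k l x) = v k l (u i j x)"
    and "u False False \<circ> v False False \<noteq> zero_op"
  obtains a where "a \<noteq> 0" "u False False a = a" "v False False a = a"
proof -
  obtain x where "u False False (v False False x) \<noteq> 0"
    using assms(4) by (auto simp: zero_op_def fun_eq_iff)
  then show ?thesis
    using that [of "u False False (v False False x)"]
    by (simp add: commute matrix_units_mult [OF u] matrix_units_mult [OF v])
qed

lemma bell_commutator_ne_zero:
  assumes u: "matrix_units u" and v: "matrix_units v"
    and commute: "\<And>i j k l x. u i j (v k l x) = v k l (u i j x)"
    and a: "u False False a = a" "v False False a = a" "a \<noteq> 0"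
    and \<chi>: "\<And>i j. u i j \<chi> = 0" "\<And>i j. v i j \<chi> = 0" and "c \<noteq> 0" "\<delta> \<noteq> 0"
  shows "commutator (u False False) (plus_proj u) (scaleR c (\<chi> + scaleR \<delta> (a + u True False (v True False a)))) \<noteq> 0"
    (is "?K \<noteq> 0")
proof
  have "u i True a = 0" "v i True a = 0" for i
    using matrix_units_fixed_vector u v a by blast+
  \<comment> \<open>\<open>?K\<close> is \<open>c \<delta> (v\<^sub>2\<^sub>1 a - u\<^sub>2\<^sub>1 a) / 2\<close>, and \<open>v\<^sub>1\<^sub>2 u\<^sub>1\<^sub>1\<close> picks out its \<open>v\<^sub>2\<^sub>1 a\<close> part\<close>
  then have "v False True (u False False ?K) = scaleR (c * \<delta> / 2) a"
    using a \<chi>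
    by (simp add: commutator_def op_diff_def plus_proj_def commute matrix_units_mult [OF u]
        matrix_units_mult [OF v] matrix_units_linear [OF u] matrix_units_linear [OF v] algebra_simps)
  moreover assume "?K = 0"
  ultimately show False
    using a \<open>c \<noteq> 0\<close> \<open>\<delta> \<noteq> 0\<close> by (simp add: matrix_units_linear [OF u] matrix_units_linear [OF v])
qed

lemma bell_vector_EPR_conditions:
  assumes u: "matrix_units u" and v: "matrix_units v"
    and commute: "\<And>i j k l x. u i j (v k l x) = v k l (u i j x)"
    and a: "u False False a = a" "v False False a = a" "a \<noteq> 0"
    and \<chi>: "\<And>i j. u i j \<chi> = 0" "\<And>i j. v i j \<chi> = 0" and "c \<noteq> 0" "\<delta> \<noteq> 0"
  defines "\<Psi> \<equiv> scaleR c (\<chi> + scaleR \<delta> (a + u True False (v True False a)))"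
  shows "u False False \<Psi> = v False False \<Psi>" "plus_proj u \<Psi> = plus_proj v \<Psi>"
    "commutator (u False False) (plus_proj u) \<Psi> \<noteq> 0" "commutator (v False False) (plus_proj v) \<Psi> \<noteq> 0"
proof -
  have top: "u i True a = 0" "v i True a = 0" for i
    using matrix_units_fixed_vector u v a by blast+
  \<comment> \<open>needed because \<open>commute\<close> moves every \<open>v\<close> outside every \<open>u\<close>\<close>
  have cross: "v False False (u i j a) = u i j a" "v k True (u i j a) = 0" for i j k
    using a(2) top(2) by (simp_all add: commute [symmetric] matrix_units_linear [OF u])
  note simps = top cross a \<chi> \<Psi>_def commute matrix_units_mult [OF u] matrix_units_mult [OF v]
    matrix_units_linear [OF u] matrix_units_linear [OF v]
  show "u False False \<Psi> = v False False \<Psi>"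
    by (simp add: simps)
  show "plus_proj u \<Psi> = plus_proj v \<Psi>"
    by (simp add: simps plus_proj_def algebra_simps)
  show "commutator (u False False) (plus_proj u) \<Psi> \<noteq> 0"
    unfolding \<Psi>_def by (rule bell_commutator_ne_zero [OF u v commute a \<chi> \<open>c \<noteq> 0\<close> \<open>\<delta> \<noteq> 0\<close>])
  have "\<Psi> = scaleR c (\<chi> + scaleR \<delta> (a + v True False (u True False a)))"
    by (simp add: \<Psi>_def commute)
  then show "commutator (v False False) (plus_proj v) \<Psi> \<noteq> 0"
    using bell_commutator_ne_zero [OF v u commute [symmetric] a(2,1,3) \<chi>(2,1) \<open>c \<noteq> 0\<close> \<open>\<delta> \<noteq> 0\<close>]
    by simp
qed

lemma EPR_state_vector_stateI:
  assumes "bounded_op A" "bounded_op B" "A \<Psi> = B \<Psi>"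
  shows "EPR_state (vector_state \<Psi>) A B"
  using assms by (simp add: EPR_state_def vector_state_def op_diff_def bounded_op_zero)

lemma vector_state_abs_sq:
  fixes C :: "'h::chilbert_space \<Rightarrow> 'h"
  assumes "bounded_op C"
  shows "vector_state \<Psi> (abs_sq C) = of_real (norm (C \<Psi>) ^ 2)"
proof -
  have "adjoint_pair (adj C) C"
    using adjoint_pair_adj [OF assms] adjoint_pair_sym by blast
  then show ?thesis
    by (simp add: vector_state_def abs_sq_def adjoint_pair_def cinner_self_eq_norm_sq)
qed

lemma EPR_incommensurable_vector_stateI:
  fixes \<Psi> :: "'h::chilbert_space"
  assumes "E \<in> N1" "F \<in> N1" "E' \<in> N2" "F' \<in> N2"
    and "is_projection E" "is_projection F" "is_projection E'" "is_projection F'"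
    and "E \<Psi> = E' \<Psi>" "F \<Psi> = F' \<Psi>"
    and "commutator E F \<Psi> \<noteq> 0" "commutator E' F' \<Psi> \<noteq> 0"
  shows "EPR_incommensurable N1 N2 (vector_state \<Psi>)"
proof -
  have "bounded_op E" "bounded_op F" "bounded_op E'" "bounded_op F'"
    using assms(5-8) by (simp_all add: is_projection_def)
  then have "EPR_state (vector_state \<Psi>) E E'" "EPR_state (vector_state \<Psi>) F F'"
    "vector_state \<Psi> (abs_sq (commutator E F)) \<noteq> 0" "vector_state \<Psi> (abs_sq (commutator E' F')) \<noteq> 0"
    using assms(9-12) by (simp_all add: EPR_state_vector_stateI vector_state_abs_sq bounded_op_commutator)
  then show ?thesis
    using assms(1-8) unfolding EPR_incommensurable_def by blast
qed

lemma EPR_incommensurable_bell_state: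
  fixes N1 N2 :: "('h::chilbert_space \<Rightarrow> 'h) set"
  assumes "von_neumann_algebra N1" "von_neumann_algebra N2"
    and u: "matrix_units u" "\<And>i j. u i j \<in> N1" and v: "matrix_units v" "\<And>i j. v i j \<in> N2"
    and commute: "\<And>i j k l x. u i j (v k l x) = v k l (u i j x)"
    and a: "u False False a = a" "v False False a = a" "a \<noteq> 0"
    and \<chi>: "\<And>i j. u i j \<chi> = 0" "\<And>i j. v i j \<chi> = 0" and "c \<noteq> 0" "\<delta> \<noteq> 0"
  shows "EPR_incommensurable N1 N2
           (vector_state (scaleR c (\<chi> + scaleR \<delta> (a + u True False (v True False a)))))"
proof (rule EPR_incommensurable_vector_stateI [where E = "u False False" and F = "plus_proj u"
      and E' = "v False False" and F' = "plus_proj v"])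
  show "plus_proj u \<in> N1" "plus_proj v \<in> N2"
    using assms(1,2) u(2) v(2) by (simp_all add: von_neumann_algebra_plus_proj)
  show "is_projection (u False False)" "is_projection (plus_proj u)"
    "is_projection (v False False)" "is_projection (plus_proj v)"
    using u(1) v(1) by (simp_all add: matrix_units_is_projection is_projection_plus_proj)
qed (use u(2) v(2) bell_vector_EPR_conditions [OF u(1) v(1) commute a \<chi> \<open>c \<noteq> 0\<close> \<open>\<delta> \<noteq> 0\<close>] in auto)

lemma small_positive_multiple:
  fixes x :: "'a::real_normed_vector"
  assumes "\<eta> > 0"
  obtains \<delta> where "\<delta> > 0" "norm (scaleR \<delta> x) < \<eta>"
proof
  show "\<eta> / (norm x + 1) > 0"
    using assms by (simp add: add_nonneg_pos)
  have "norm (scaleR (\<eta> / (norm x + 1)) x) = \<eta> * (norm x / (norm x + 1))"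
    using assms \<open>\<eta> / (norm x + 1) > 0\<close> by simp
  also have "\<dots> < \<eta> * 1"
    using assms by (intro mult_strict_left_mono) (auto simp: add_nonneg_pos)
  finally show "norm (scaleR (\<eta> / (norm x + 1)) x) < \<eta>"
    by simp
qed

lemma norm_diff_sgn_le:
  fixes x y :: "'a::real_normed_vector"
  assumes "norm x = 1"
  shows "norm (x - sgn y) \<le> 2 * norm (x - y)"
proof (cases "y = 0")
  case False
  have "y - sgn y = scaleR (1 - inverse (norm y)) y"
    by (simp add: sgn_div_norm algebra_simps)
  then have "norm (y - sgn y) = \<bar>(1 - inverse (norm y)) * norm y\<bar>"
    by (simp add: abs_mult)
  moreover have "(1 - inverse (norm y)) * norm y = norm y - 1"
    using False by (simp add: field_simps)
  ultimately have "norm (y - sgn y) = \<bar>norm y - 1\<bar>"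
    by simp
  also have "\<dots> \<le> norm (x - y)"
    using norm_triangle_ineq3 [of x y] assms by (simp add: abs_minus_commute)
  finally show ?thesis
    using norm_triangle_ineq [of "x - y" "y - sgn y"] by simp
qed (simp add: assms)

lemma exists_EPR_vector_near:
  fixes N1 N2 :: "('h::chilbert_space \<Rightarrow> 'h) set"
  assumes "von_neumann_algebra N1" "von_neumann_algebra N2"
    and u: "matrix_units u" "\<And>i j. u i j \<in> N1" and v: "matrix_units v" "\<And>i j. v i j \<in> N2"
    and commute: "\<And>i j k l x. u i j (v k l x) = v k l (u i j x)"
    and "u False False \<circ> v False False \<noteq> zero_op"
    and "norm \<Psi> = 1" and small: "\<And>i. norm (u i i \<Psi>) < \<eta>" "\<And>i. norm (v i i \<Psi>) < \<eta>"
    and "\<eta> \<le> 1/5"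
  obtains \<Psi>' where "norm \<Psi>' = 1" "norm (\<Psi> - \<Psi>') < 10 * \<eta>"
    "EPR_incommensurable N1 N2 (vector_state \<Psi>')"
proof -
  obtain a where a: "a \<noteq> 0" "u False False a = a" "v False False a = a"
    using matrix_units_common_vector [OF u(1) v(1) commute \<open>u False False \<circ> v False False \<noteq> zero_op\<close>] .
  define \<chi> where "\<chi> = compl_proj u (compl_proj v \<Psi>)"
  define \<xi> where "\<xi> = a + u True False (v True False a)"
  have "\<eta> > 0"
    using small(1) [of True] norm_ge_zero order_le_less_trans by blast
  then obtain \<delta> where "\<delta> > 0" "norm (scaleR \<delta> \<xi>) < \<eta>"
    by (rule small_positive_multiple)
  moreover have "norm (\<Psi> - \<chi>) < 4 * \<eta>"
    using norm_diff_compl_proj_le [OF u(1) v(1) commute, of \<Psi>] small [of True] small [of False]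
    unfolding \<chi>_def by linarith
  ultimately have close: "norm (\<Psi> - (\<chi> + scaleR \<delta> \<xi>)) < 5 * \<eta>"
    using norm_triangle_ineq4 [of "\<Psi> - \<chi>" "scaleR \<delta> \<xi>"] by (simp add: algebra_simps)
  then have "\<chi> + scaleR \<delta> \<xi> \<noteq> 0"
    using \<open>norm \<Psi> = 1\<close> \<open>\<eta> \<le> 1/5\<close> by auto
  have "u i j \<chi> = 0" "v i j \<chi> = 0" for i j
    unfolding \<chi>_def using u(1) v(1) commute by (rule matrix_units_compl_proj_compl_proj)+
  then have "EPR_incommensurable N1 N2 (vector_state (sgn (\<chi> + scaleR \<delta> \<xi>)))"
    unfolding sgn_div_norm \<xi>_def
    using \<open>\<chi> + scaleR \<delta> \<xi> \<noteq> 0\<close> \<open>\<delta> > 0\<close>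
    by (intro EPR_incommensurable_bell_state [OF assms(1,2) u(1,2) v(1,2) commute a(2,3,1)])
      (auto simp: \<xi>_def)
  moreover have "norm (sgn (\<chi> + scaleR \<delta> \<xi>)) = 1"
    using \<open>\<chi> + scaleR \<delta> \<xi> \<noteq> 0\<close> by (simp add: norm_sgn)
  moreover have "norm (\<Psi> - sgn (\<chi> + scaleR \<delta> \<xi>)) < 10 * \<eta>"
    using norm_diff_sgn_le [OF \<open>norm \<Psi> = 1\<close>, of "\<chi> + scaleR \<delta> \<xi>"] close by simp
  ultimately show ?thesis
    using that by blast
qed

theorem theorem3:
  fixes N1 N2 :: "('h::chilbert_space \<Rightarrow> 'h) set"
  assumes "von_neumann_algebra N1" and "von_neumann_algebra N2"
    and "properly_infinite N1" and "properly_infinite N2"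
    and "N1 \<subseteq> commutant N2"
    and "\<forall>X1\<in>N1. \<forall>X2\<in>N2. X1 \<noteq> zero_op \<and> X2 \<noteq> zero_op \<longrightarrow> X1 \<circ> X2 \<noteq> zero_op"
  shows "\<forall>\<Psi>::'h. \<forall>\<epsilon>>0. norm \<Psi> = 1 \<longrightarrow>
           (\<exists>\<Psi>'. norm \<Psi>' = 1 \<and> norm (\<Psi> - \<Psi>') < \<epsilon> \<and>
              EPR_incommensurable N1 N2 (vector_state \<Psi>'))"
proof (intro allI impI)
  fix \<Psi> :: 'h and \<epsilon> :: real
  assume "\<epsilon> > 0" "norm \<Psi> = 1"
  define \<eta> where "\<eta> = min \<epsilon> 1 / 10"
  have "\<eta> > 0" "\<Psi> \<noteq> 0"
    using \<open>\<epsilon> > 0\<close> \<open>norm \<Psi> = 1\<close> by (auto simp: \<eta>_def)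
  obtain u where u: "matrix_units u" "\<And>i j. u i j \<in> N1" "u False False \<noteq> zero_op"
    "\<And>i. norm (u i i \<Psi>) < \<eta>"
    using properly_infinite_small_matrix_units [OF assms(1,3) \<open>\<Psi> \<noteq> 0\<close> \<open>\<eta> > 0\<close>] by blast
  obtain v where v: "matrix_units v" "\<And>i j. v i j \<in> N2" "v False False \<noteq> zero_op"
    "\<And>i. norm (v i i \<Psi>) < \<eta>"
    using properly_infinite_small_matrix_units [OF assms(2,4) \<open>\<Psi> \<noteq> 0\<close> \<open>\<eta> > 0\<close>] by blast
  have "u i j (v k l x) = v k l (u i j x)" for i j k l x
    using assms(5) u(2) v(2) by (blast intro: commutant_commute)
  moreover have "u False False \<circ> v False False \<noteq> zero_op"
    using assms(6) u(2,3) v(2,3) by blast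
  moreover have "\<eta> \<le> 1/5"
    by (simp add: \<eta>_def)
  ultimately obtain \<Psi>' where "norm \<Psi>' = 1" "norm (\<Psi> - \<Psi>') < 10 * \<eta>"
    "EPR_incommensurable N1 N2 (vector_state \<Psi>')"
    by (rule exists_EPR_vector_near [OF assms(1,2) u(1,2) v(1,2) _ _ \<open>norm \<Psi> = 1\<close> u(4) v(4)])
  then show "\<exists>\<Psi>'. norm \<Psi>' = 1 \<and> norm (\<Psi> - \<Psi>') < \<epsilon> \<and> EPR_incommensurable N1 N2 (vector_state \<Psi>')"
    by (auto simp: \<eta>_def)
qed

end
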